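(* Let $(M,d)$ be a metric space with at least two points and let $E$ be a Banach space. Then the set of non-injective functions in $\mathrm{Lip}(M,E)$ is pointwise $\dim E$-spaceable in $\mathrm{Lip}(M,E)$: for every non-injective $f\in\mathrm{Lip}(M,E)$ there is a closed linear subspace $X$ of $\mathrm{Lip}(M,E)$ of dimension $\dim E$ such that $f\in X$ and every function in $X$ is non-injective.
   Context: $\mathrm{Lip}(M,E)$ is the Banach space of bounded Lipschitz functions $f\colon M\to E$ with the norm $\|f\|_{\mathrm{Lip}}=\max\{\|f\|_d,\|f\|_\infty\}$, where $\|f\|_d=\sup\{\|f(x)-f(y)\|/d(x,y): x\ne y\}$ and $\|f\|_\infty=\sup_{x\in M}\|f(x)\|$. *)

theory Defs
  imports "HOL-Analysis.Analysis" "HOL-Library.Function_Algebras" "HOL-Library.Equipollence"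
begin

definition fun_scale :: "real \<Rightarrow> ('a \<Rightarrow> 'b::real_vector) \<Rightarrow> ('a \<Rightarrow> 'b)" where
  "fun_scale c f = (\<lambda>x. c *\<^sub>R f x)"

text \<open>Lip(M,E): bounded Lipschitz functions (M is the whole type 'a).\<close>
definition Lip :: "('a::metric_space \<Rightarrow> 'b::real_normed_vector) set" where
  "Lip = {f. bounded (range f) \<and> (\<exists>L. L-lipschitz_on UNIV f)}"

definition lip_const :: "('a::metric_space \<Rightarrow> 'b::real_normed_vector) \<Rightarrow> real" where
  "lip_const f = (SUP p\<in>{(x,y). x \<noteq> y}. dist (f (fst p)) (f (snd p)) / dist (fst p) (snd p))"

definition sup_norm :: "('a \<Rightarrow> 'b::real_normed_vector) \<Rightarrow> real" where
  "sup_norm f = (SUP x. norm (f x))"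

definition lip_norm :: "('a::metric_space \<Rightarrow> 'b::real_normed_vector) \<Rightarrow> real" where
  "lip_norm f = max (lip_const f) (sup_norm f)"

definition lip_closed :: "('a::metric_space \<Rightarrow> 'b::real_normed_vector) set \<Rightarrow> bool" where
  "lip_closed X \<longleftrightarrow> (\<forall>g h. (\<forall>n. g n \<in> X) \<longrightarrow> h \<in> Lip \<longrightarrow>
      (\<lambda>n. lip_norm (\<lambda>x. g n x - h x)) \<longlonglongrightarrow> 0 \<longrightarrow> h \<in> X)"

definition has_dim_of_E :: "('a \<Rightarrow> 'b::real_vector) set \<Rightarrow> bool" where
  "has_dim_of_E X \<longleftrightarrow> (\<exists>B BE::'b set.
      \<not> module.dependent fun_scale B \<and> module.span fun_scale B = X \<and>
      \<not> dependent BE \<and> span BE = UNIV \<and> B \<approx> BE)"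

end

theory Submission
  imports Defs
begin

text \<open>Every function of the form \<open>t f + e\<close> with a constant \<open>e \<in> E\<close> identifies the two
  points where f fails to be injective. If f is constant, the constant functions form the
  required subspace. Otherwise take \<open>\<real> f \<oplus> S\<close> for a closed subspace S of E with
  \<open>1 + dim S = dim E\<close>: S = E when E is infinite-dimensional, and the span of all but one
  vector of a basis otherwise. Convergence in the Lipschitz norm implies pointwise convergence,
  and evaluating at two points separated by f shows that pointwise limits stay in
  \<open>\<real> f \<oplus> S\<close>.\<close>

interpretation fun_space: vector_space "fun_scale :: real \<Rightarrow> ('a \<Rightarrow> 'b::real_vector) \<Rightarrow> _"
  by unfold_locales (auto simp: fun_scale_def fun_eq_iff algebra_simps)

interpretation const_fun:
  module_hom "scaleR :: real \<Rightarrow> 'b::real_vector \<Rightarrow> 'b" "fun_scale :: real \<Rightarrow> ('a \<Rightarrow> 'b) \<Rightarrow> _"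
    "\<lambda>e x. e"
  by unfold_locales (auto simp: fun_scale_def fun_eq_iff)

lemma inj_const_fun: "inj (\<lambda>e (x::'a). e)"
  by (auto simp: inj_def fun_eq_iff)

lemma fun_span_const_image: "fun_space.span ((\<lambda>e x. e) ` B) = (\<lambda>e x. e) ` span B"
  by (simp add: const_fun.span_image span_raw_def)

lemma fun_independent_const_image:
  "independent B \<Longrightarrow> \<not> fun_space.dependent ((\<lambda>e x. e) ` B)"
  by (rule const_fun.independent_injective_image)
    (use inj_const_fun in \<open>auto simp: dependent_raw_def inj_on_def\<close>)

lemma Lip_const: "(\<lambda>x. c) \<in> Lip"
  unfolding Lip_def by (auto intro: lipschitz_on_constant)

lemma Lip_add:
  assumes "f \<in> Lip" "g \<in> Lip" shows "(\<lambda>x. f x + g x) \<in> Lip"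
proof -
  obtain L L' where "L-lipschitz_on UNIV f" "L'-lipschitz_on UNIV g"
    using assms by (auto simp: Lip_def)
  moreover obtain A B where "\<forall>x. norm (f x) \<le> A" "\<forall>x. norm (g x) \<le> B"
    using assms by (auto simp: Lip_def bounded_iff)
  then have "\<forall>x. norm (f x + g x) \<le> A + B"
    by (meson add_mono norm_triangle_le)
  ultimately show ?thesis
    unfolding Lip_def bounded_iff by (blast intro: lipschitz_on_add)
qed

lemma Lip_scaleR:
  assumes "f \<in> Lip" shows "(\<lambda>x. t *\<^sub>R f x) \<in> Lip"
proof -
  obtain L where "L-lipschitz_on UNIV f"
    using assms by (auto simp: Lip_def)
  moreover obtain A where "\<forall>x. norm (f x) \<le> A"
    using assms by (auto simp: Lip_def bounded_iff)
  then have "\<forall>x. norm (t *\<^sub>R f x) \<le> \<bar>t\<bar> * A"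
    by (simp add: mult_left_mono)
  ultimately show ?thesis
    unfolding Lip_def bounded_iff by (blast intro: lipschitz_on_cmult)
qed

lemma Lip_diff: "f \<in> Lip \<Longrightarrow> g \<in> Lip \<Longrightarrow> (\<lambda>x. f x - g x) \<in> Lip"
  using Lip_add[of f "\<lambda>x. (-1) *\<^sub>R g x"] Lip_scaleR[of g "-1"] by simp

lemma norm_le_lip_norm:
  assumes "f \<in> Lip" shows "norm (f x) \<le> lip_norm f"
proof -
  have "bdd_above (range (\<lambda>y. norm (f y)))"
    using assms by (auto simp: Lip_def bounded_iff intro: bdd_aboveI2)
  then have "norm (f x) \<le> sup_norm f"
    unfolding sup_norm_def by (rule cSUP_upper[rotated]) simp
  then show ?thesis
    unfolding lip_norm_def by simp
qed

lemma lip_norm_tendsto_imp_pointwise: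
  assumes "\<And>n. g n \<in> Lip" "h \<in> Lip" "(\<lambda>n. lip_norm (\<lambda>x. g n x - h x)) \<longlonglongrightarrow> 0"
  shows "(\<lambda>n. g n x) \<longlonglongrightarrow> h x"
proof -
  have "norm (g n x - h x) \<le> lip_norm (\<lambda>x. g n x - h x)" for n
    using assms(1,2) by (intro norm_le_lip_norm Lip_diff)
  then have "(\<lambda>n. g n x - h x) \<longlonglongrightarrow> 0"
    by (intro Lim_null_comparison[OF _ assms(3)]) simp
  then show ?thesis
    by (rule LIM_zero_cancel)
qed

lemma lip_closedI_pointwise:
  assumes "X \<subseteq> Lip"
    and "\<And>g h. (\<And>n. g n \<in> X) \<Longrightarrow> (\<And>x. (\<lambda>n. g n x) \<longlonglongrightarrow> h x) \<Longrightarrow> h \<in> X"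
  shows "lip_closed X"
  unfolding lip_closed_def using assms lip_norm_tendsto_imp_pointwise by blast

lemma convergent_if_dist_dominated:
  fixes y :: "nat \<Rightarrow> 'b::metric_space" and t :: "nat \<Rightarrow> real"
  assumes "convergent y" "d > 0" "\<And>m n. \<bar>t m - t n\<bar> * d \<le> dist (y m) (y n)"
  shows "convergent t"
proof -
  have "Cauchy t"
  proof (rule metric_CauchyI)
    fix e :: real assume "e > 0"
    then obtain M where M: "\<forall>m\<ge>M. \<forall>n\<ge>M. dist (y m) (y n) < e * d"
      using assms(1,2) convergent_Cauchy by (metis metric_CauchyD mult_pos_pos)
    have "dist (t m) (t n) < e" if "m \<ge> M" "n \<ge> M" for m n
    proof -
      have "\<bar>t m - t n\<bar> * d < e * d"
        using M assms(3)[of m n] that by (meson order_le_less_trans)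
      then show ?thesis
        using assms(2) by (simp add: dist_real_def)
    qed
    then show "\<exists>M. \<forall>m\<ge>M. \<forall>n\<ge>M. dist (t m) (t n) < e"
      by blast
  qed
  then show ?thesis
    by (simp add: Cauchy_convergent_iff)
qed

lemma closed_span_insert:
  fixes S :: "'b::real_normed_vector set"
  assumes closed: "closed (span S)" and v: "v \<notin> span S"
  shows "closed (span (insert v S))"
proof -
  define d where "d = infdist v (span S)"
  have "d \<noteq> 0"
    using in_closed_iff_infdist_zero[OF closed, of v] v span_zero unfolding d_def by blast
  then have "d > 0"
    using infdist_nonneg[of v "span S"] unfolding d_def by linarith
  have coefficient_bound: "\<bar>c\<bar> * d \<le> norm (s + c *\<^sub>R v)" if "s \<in> span S" for s c
  proof (cases "c = 0")
    case False
    have "d \<le> dist v ((- (1/c)) *\<^sub>R s)"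
      unfolding d_def using that by (intro infdist_le span_scale)
    also have "\<dots> = norm (v + (1/c) *\<^sub>R s)"
      by (simp add: dist_norm)
    finally have "\<bar>c\<bar> * d \<le> norm (c *\<^sub>R (v + (1/c) *\<^sub>R s))"
      by (simp add: mult_left_mono)
    also have "c *\<^sub>R (v + (1/c) *\<^sub>R s) = s + c *\<^sub>R v"
      using False by (simp add: algebra_simps)
    finally show ?thesis .
  qed simp
  show ?thesis
    unfolding closed_sequential_limits
  proof (intro allI impI, elim conjE)
    fix y l assume y: "\<forall>n. y n \<in> span (insert v S)" and lim: "y \<longlonglongrightarrow> l"
    have "\<forall>n. \<exists>c. y n - c *\<^sub>R v \<in> span S"
      using y by (simp add: span_breakdown_eq)
    then obtain c where c: "\<And>n. y n - c n *\<^sub>R v \<in> span S"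
      by metis
    have "convergent c"
    proof (rule convergent_if_dist_dominated[OF _ \<open>d > 0\<close>])
      show "convergent y"
        using lim convergent_def by blast
      fix m n
      have "(y m - c m *\<^sub>R v) - (y n - c n *\<^sub>R v) \<in> span S"
        using c span_diff by blast
      from coefficient_bound[OF this, of "c m - c n"]
      show "\<bar>c m - c n\<bar> * d \<le> dist (y m) (y n)"
        by (simp add: dist_norm algebra_simps)
    qed
    then obtain c0 where "c \<longlonglongrightarrow> c0"
      using convergent_def by blast
    then have "(\<lambda>n. y n - c n *\<^sub>R v) \<longlonglongrightarrow> l - c0 *\<^sub>R v"
      by (intro tendsto_intros lim)
    then have "l - c0 *\<^sub>R v \<in> span S"
      by (rule closed_sequentially[OF closed, rotated]) (use c in auto)
    then show "l \<in> span (insert v S)"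
      unfolding span_breakdown_eq by blast
  qed
qed

lemma closed_span_finite:
  fixes S :: "'b::real_normed_vector set"
  shows "finite S \<Longrightarrow> closed (span S)"
proof (induction S rule: finite_induct)
  case (insert v S)
  then show ?case
    by (metis closed_span_insert span_redundant)
qed simp

text \<open>In infinite dimension a Hamel basis minus one vector may span a dense hyperplane, so
  there the whole basis is kept and the extra vector is paid for by infinite cardinality.\<close>
lemma closed_span_one_short_of_basis:
  fixes BE :: "'b::real_normed_vector set"
  assumes "independent BE" "span BE = UNIV" "BE \<noteq> {}"
  obtains BH :: "'b set" and v
  where "independent BH" "closed (span BH)" "v \<notin> BH" "insert v BH \<approx> BE"
proof (cases "finite BE")
  case True
  then obtain v where "v \<in> BE"
    using assms(3) by blast
  show ?thesis
  proof (rule that)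
    show "independent (BE - {v})"
      using assms(1) by (rule independent_mono) blast
    show "closed (span (BE - {v}))"
      using True by (intro closed_span_finite) simp
    show "insert v (BE - {v}) \<approx> BE"
      using \<open>v \<in> BE\<close> by (simp add: insert_absorb)
  qed simp
next
  case False
  show ?thesis
  proof (rule that)
    show "0 \<notin> BE"
      using assms(1) dependent_zero by blast
    show "insert 0 BE \<approx> BE"
      using False by (rule infinite_insert_eqpoll)
  qed (use assms in simp_all)
qed

lemma lip_closed_constants: "lip_closed (range (\<lambda>e (x::'a::metric_space). e::'b::real_normed_vector))"
proof (rule lip_closedI_pointwise)
  show "range (\<lambda>e x. e) \<subseteq> (Lip :: ('a \<Rightarrow> 'b) set)"
    using Lip_const by blast
  fix g :: "nat \<Rightarrow> 'a \<Rightarrow> 'b" and h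
  assume g: "\<And>n. g n \<in> range (\<lambda>e x. e)" and lim: "\<And>x. (\<lambda>n. g n x) \<longlonglongrightarrow> h x"
  have "h x = h y" for x y
  proof -
    have "g n x = g n y" for n
      using g[of n] by auto
    then show ?thesis
      using lim[of x] lim[of y] LIMSEQ_unique by simp
  qed
  then have "h = (\<lambda>x. h undefined)"
    by blast
  then show "h \<in> range (\<lambda>e x. e)"
    by blast
qed

lemma constants_spaceable:
  fixes a b :: "'a::metric_space" and c :: "'b::real_normed_vector"
  assumes "a \<noteq> b"
  shows "\<exists>X. X \<subseteq> Lip \<and> fun_space.subspace X \<and> lip_closed X \<and> has_dim_of_E X
    \<and> (\<lambda>x::'a. c) \<in> X \<and> (\<forall>g\<in>X. \<not> inj g)"
proof (intro exI conjI)
  obtain BE :: "'b set" where BE: "independent BE" "span BE = UNIV"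
    by (metis basis_exists[of UNIV] top_le)
  have span: "fun_space.span ((\<lambda>e (x::'a). e) ` BE) = range (\<lambda>e x. e)"
    using BE(2) by (simp add: fun_span_const_image)
  have "(\<lambda>e (x::'a). e) ` BE \<approx> BE"
    using inj_const_fun by (auto intro: inj_on_image_eqpoll_self inj_on_subset)
  then show "has_dim_of_E (range (\<lambda>(e::'b) (x::'a). e))"
    unfolding has_dim_of_E_def using fun_independent_const_image[OF BE(1)] BE span by blast
  show "fun_space.subspace (range (\<lambda>(e::'b) (x::'a). e))"
    by (metis span fun_space.subspace_span)
  show "range (\<lambda>e x. e) \<subseteq> (Lip :: ('a \<Rightarrow> 'b) set)"
    using Lip_const by blast
  show "\<forall>g\<in>range (\<lambda>(e::'b) (x::'a). e). \<not> inj g"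
    using assms by (auto simp: inj_def)
qed (auto intro: lip_closed_constants)

definition multiples_plus_consts :: "('a \<Rightarrow> 'b::real_vector) \<Rightarrow> 'b set \<Rightarrow> ('a \<Rightarrow> 'b) set" where
  "multiples_plus_consts f S = {\<lambda>x. t *\<^sub>R f x + e | t e. e \<in> S}"

lemma fun_span_insert_const_image:
  "fun_space.span (insert f ((\<lambda>e x. e) ` B)) = multiples_plus_consts f (span B)"
  unfolding fun_space.span_insert fun_span_const_image multiples_plus_consts_def
proof (intro set_eqI iffI; clarsimp)
  fix g k e assume "e \<in> span B" "g - fun_scale k f = (\<lambda>x. e)"
  then have "g = (\<lambda>x. k *\<^sub>R f x + e)"
    by (auto simp: fun_eq_iff fun_scale_def algebra_simps)
  then show "\<exists>t e. g = (\<lambda>x. t *\<^sub>R f x + e) \<and> e \<in> span B"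
    using \<open>e \<in> span B\<close> by blast
next
  fix t e assume "e \<in> span B"
  then show "\<exists>k. (\<lambda>x. t *\<^sub>R f x + e) - fun_scale k f \<in> (\<lambda>e x. e) ` span B"
    by (intro exI[of _ t]) (auto simp: fun_eq_iff fun_scale_def image_iff)
qed

lemma fun_independent_insert_nonconstant:
  assumes "f p \<noteq> f q" "independent B"
  shows "\<not> fun_space.dependent (insert f ((\<lambda>e x. e) ` B))"
proof -
  have "f \<notin> fun_space.span ((\<lambda>e x. e) ` B)"
    using assms(1) by (auto simp: fun_span_const_image)
  then show ?thesis
    using fun_independent_const_image[OF assms(2)] by (simp add: fun_space.independent_insert)
qed

lemma multiples_plus_consts_subset_Lip: "f \<in> Lip \<Longrightarrow> multiples_plus_consts f S \<subseteq> Lip"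
  unfolding multiples_plus_consts_def by (auto intro!: Lip_add Lip_scaleR Lip_const)

lemma multiples_plus_consts_not_inj:
  "f a = f b \<Longrightarrow> a \<noteq> b \<Longrightarrow> g \<in> multiples_plus_consts f S \<Longrightarrow> \<not> inj g"
  unfolding multiples_plus_consts_def inj_def by force

text \<open>Evaluating at two points separated by f recovers the coefficients of f, so they converge;
  the constant parts then converge as well and stay in the closed set S.\<close>
lemma lip_closed_multiples_plus_consts:
  assumes "f \<in> Lip" "f p \<noteq> f q" "closed S"
  shows "lip_closed (multiples_plus_consts f S)"
proof (rule lip_closedI_pointwise)
  show "multiples_plus_consts f S \<subseteq> Lip"
    using assms(1) by (rule multiples_plus_consts_subset_Lip)
  fix g h
  assume g: "\<And>n. g n \<in> multiples_plus_consts f S" and lim: "\<And>x. (\<lambda>n. g n x) \<longlonglongrightarrow> h x"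
  have "\<forall>n. \<exists>t e. g n = (\<lambda>x. t *\<^sub>R f x + e) \<and> e \<in> S"
    using g unfolding multiples_plus_consts_def by blast
  then obtain t e where g_eq: "\<And>n. g n = (\<lambda>x. t n *\<^sub>R f x + e n)" and e: "\<And>n. e n \<in> S"
    by metis
  have "convergent t"
  proof (rule convergent_if_dist_dominated)
    show "convergent (\<lambda>n. g n p - g n q)"
      unfolding convergent_def using tendsto_diff[OF lim lim] by blast
    show "norm (f p - f q) > 0"
      using assms(2) by simp
    show "\<bar>t m - t n\<bar> * norm (f p - f q) \<le> dist (g m p - g m q) (g n p - g n q)" for m n
      by (simp add: g_eq dist_norm flip: scaleR_diff_right scaleR_diff_left)
  qed
  then obtain c where c: "t \<longlonglongrightarrow> c"
    using convergent_def by blast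
  have "(\<lambda>n. g n p - t n *\<^sub>R f p) \<longlonglongrightarrow> h p - c *\<^sub>R f p"
    by (intro tendsto_intros lim c)
  then have e_lim: "e \<longlonglongrightarrow> h p - c *\<^sub>R f p"
    by (simp add: g_eq)
  then have "h p - c *\<^sub>R f p \<in> S"
    by (rule closed_sequentially[OF assms(3), rotated]) (use e in auto)
  moreover have "h = (\<lambda>x. c *\<^sub>R f x + (h p - c *\<^sub>R f p))"
  proof
    fix x
    have "(\<lambda>n. g n x) \<longlonglongrightarrow> c *\<^sub>R f x + (h p - c *\<^sub>R f p)"
      unfolding g_eq by (intro tendsto_intros c e_lim)
    then show "h x = c *\<^sub>R f x + (h p - c *\<^sub>R f p)"
      using lim LIMSEQ_unique by blast
  qed
  ultimately show "h \<in> multiples_plus_consts f S"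
    unfolding multiples_plus_consts_def by blast
qed

lemma nonconstant_spaceable:
  fixes f :: "'a::metric_space \<Rightarrow> 'b::real_normed_vector"
  assumes "f \<in> Lip" "f a = f b" "a \<noteq> b" "f p \<noteq> f q"
  shows "\<exists>X. X \<subseteq> Lip \<and> fun_space.subspace X \<and> lip_closed X \<and> has_dim_of_E X
    \<and> f \<in> X \<and> (\<forall>g\<in>X. \<not> inj g)"
proof -
  obtain BE :: "'b set" where BE: "independent BE" "span BE = UNIV"
    by (metis basis_exists[of UNIV] top_le)
  moreover have "BE \<noteq> {}"
    using BE(2) assms(4) by (metis UNIV_I empty_iff insert_iff span_empty)
  ultimately obtain BH :: "'b set" and v
    where BH: "independent BH" "closed (span BH)" "v \<notin> BH" "insert v BH \<approx> BE"
    by (rule closed_span_one_short_of_basis)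
  define B where "B = insert f ((\<lambda>e x. e) ` BH)"
  have "(\<lambda>e (x::'a). e) ` BH \<approx> BH"
    using inj_const_fun by (auto intro: inj_on_image_eqpoll_self inj_on_subset)
  then have "B \<approx> insert v BH"
    unfolding B_def using assms(4) BH(3) by (intro insert_eqpoll_cong) auto
  then have "has_dim_of_E (fun_space.span B)"
    unfolding has_dim_of_E_def B_def
    using fun_independent_insert_nonconstant[of f p q, OF assms(4) BH(1)] BE BH(4) eqpoll_trans
    by blast
  moreover have "fun_space.span B = multiples_plus_consts f (span BH)"
    unfolding B_def by (rule fun_span_insert_const_image)
  moreover have "f \<in> multiples_plus_consts f (span BH)"
    unfolding multiples_plus_consts_def
    by (intro CollectI exI[of _ 1] exI[of _ 0]) (simp add: span_zero)
  ultimately show ?thesis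
    using assms BH(2) multiples_plus_consts_subset_Lip multiples_plus_consts_not_inj
      lip_closed_multiples_plus_consts fun_space.subspace_span by metis
qed

theorem proposition4p7:
  fixes f :: "'a::metric_space \<Rightarrow> 'b::banach"
  assumes "\<exists>x y::'a. x \<noteq> y"
    and "f \<in> Lip"
    and "\<not> inj f"
  shows "\<exists>X. X \<subseteq> Lip \<and> module.subspace fun_scale X \<and> lip_closed X \<and> has_dim_of_E X
             \<and> f \<in> X \<and> (\<forall>g\<in>X. \<not> inj g)"
proof -
  obtain a b where ab: "f a = f b" "a \<noteq> b"
    using assms(3) unfolding inj_def by blast
  show ?thesis
  proof (cases "\<exists>p q. f p \<noteq> f q")
    case True
    then show ?thesis
      using nonconstant_spaceable[OF assms(2) ab] by blast
  next
    case False
    then have "f = (\<lambda>x. f a)"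
      by blast
    then show ?thesis
      using constants_spaceable[OF ab(2), of "f a"] by simp
  qed
qed

end
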